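(* Let $H_0$ be a Hermitian operator on a finite-dimensional Hilbert space with ground-space projection $P_0$, $Q_0=I-P_0$, ground energy $E_0$, $G=Q_0(E_0I-H_0)^{-1}Q_0$, and $V$ Hermitian. Then $V_{\mathrm{od}}\in\Gamma^\star(1)$, $S_n\in\Gamma^\star(n)$ for every $n\in\mathbb{N}$, and $\hat S^k(V_{\mathrm{od}})_m\in\Gamma(m+1)$ for all $k,m$.
   Context: $\Gamma(n)$ is the linear span of operators $Z_0VZ_1V\cdots Z_{n-1}VZ_n$ ($n$ factors of $V$) with each $Z_j\in\{P_0,Q_0\}\cup\{G^m:m\in\mathbb{N}\}$; $\Gamma^\star(n)\subseteq\Gamma(n)$ is the span of such products that additionally satisfy $Z_0Z_n=Z_nZ_0=0$. Set $V_{\mathrm d}=P_0VP_0+Q_0VQ_0$, $V_{\mathrm{od}}=P_0VQ_0+Q_0VP_0$, $\mathcal{L}(X)=P_0XG-GXP_0$, $\mathrm{ad}_S(X)=[S,X]$, $a_m=2^m\beta_m/m!$ with $\beta_m$ the Bernoulli numbers. Define $S_1=\mathcal{L}(V_{\mathrm{od}})$, $S_2=-\mathcal{L}(\mathrm{ad}_{V_{\mathrm d}}(S_1))$, and for $n\ge3$, $S_n=-\mathcal{L}(\mathrm{ad}_{V_{\mathrm d}}(S_{n-1}))+\sum_{j\ge1}a_{2j}\mathcal{L}(\hat S^{2j}(V_{\mathrm{od}})_{n-1})$, where $\hat S^k(V_{\mathrm{od}})_m=\sum_{n_1,\dots,n_k\ge1,\ \sum_r n_r=m}\mathrm{ad}_{S_{n_1}}\cdots\mathrm{ad}_{S_{n_k}}(V_{\mathrm{od}})$.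 *)

theory Defs
  imports "HOL-Analysis.Analysis"
begin

text \<open>Operators on the finite-dimensional Hilbert space complex^'n are the
  matrices complex^'n^'n (matrix product **, identity mat 1).\<close>

definition adj_mat :: "complex^'n^'n \<Rightarrow> complex^'n^'n" where
  "adj_mat A = (\<chi> i j. cnj (A $ j $ i))"

definition hermitian_mat :: "complex^'n^'n \<Rightarrow> bool" where
  "hermitian_mat A \<longleftrightarrow> adj_mat A = A"

definition cscale :: "complex \<Rightarrow> complex^'n^'n \<Rightarrow> complex^'n^'n" where
  "cscale c A = (\<chi> i j. c * A $ i $ j)"

definition cspan :: "(complex^'n^'n) set \<Rightarrow> (complex^'n^'n) set" where
  "cspan S = module.span cscale S"

definition mpow :: "complex^'n^'n \<Rightarrow> nat \<Rightarrow> complex^'n^'n" where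
  "mpow A m = (((**) A) ^^ m) (mat 1)"

text \<open>Bernoulli numbers: beta 0 = 1 and sum_{k=0}^{m} C(m+1,k) beta k = 0 for m \<ge> 1
  (convention beta 1 = -1/2; only even indices are used below).\<close>

fun bernoulli :: "nat \<Rightarrow> real" where
  "bernoulli n = (if n = 0 then 1 else
     - (\<Sum>k<n. real (Suc n choose k) * bernoulli k) / real (Suc n))"

declare bernoulli.simps [simp del]

definition a_coef :: "nat \<Rightarrow> real" where
  "a_coef m = 2 ^ m * bernoulli m / fact m"

definition Qop :: "complex^'n^'n \<Rightarrow> complex^'n^'n" where
  "Qop P0 = mat 1 - P0"

text \<open>Reduced resolvent G = Q0 (E0 I - H0)^{-1} Q0, i.e. the inverse of E0 I - H0
  on the range of Q0, extended by 0 on the ground space. Since H0 commutes with P0,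
  E0 I - H0 + P0 is invertible and Q0 (E0 I - H0 + P0)^{-1} Q0 is exactly that operator.\<close>

definition red_resolvent :: "real \<Rightarrow> complex^'n^'n \<Rightarrow> complex^'n^'n \<Rightarrow> complex^'n^'n" where
  "red_resolvent E0 H0 P0 =
     Qop P0 ** matrix_inv (mat (complex_of_real E0) - H0 + P0) ** Qop P0"

definition Vd :: "complex^'n^'n \<Rightarrow> complex^'n^'n \<Rightarrow> complex^'n^'n" where
  "Vd P0 V = P0 ** V ** P0 + Qop P0 ** V ** Qop P0"

definition Vod :: "complex^'n^'n \<Rightarrow> complex^'n^'n \<Rightarrow> complex^'n^'n" where
  "Vod P0 V = P0 ** V ** Qop P0 + Qop P0 ** V ** P0"

definition Lop :: "complex^'n^'n \<Rightarrow> complex^'n^'n \<Rightarrow> complex^'n^'n \<Rightarrow> complex^'n^'n" where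
  "Lop P0 G X = P0 ** X ** G - G ** X ** P0"

definition ad :: "complex^'n^'n \<Rightarrow> complex^'n^'n \<Rightarrow> complex^'n^'n" where
  "ad S X = S ** X - X ** S"

definition compositions :: "nat \<Rightarrow> nat \<Rightarrow> nat list set" where
  "compositions k m = {ns. length ns = k \<and> (\<forall>r\<in>set ns. 1 \<le> r) \<and> sum_list ns = m}"

definition hatS_gen :: "(nat \<Rightarrow> complex^'n^'n) \<Rightarrow> complex^'n^'n \<Rightarrow> nat \<Rightarrow> nat \<Rightarrow> complex^'n^'n" where
  "hatS_gen T X k m = (\<Sum>ns\<in>compositions k m. foldr (\<lambda>i Y. ad (T i) Y) ns X)"

text \<open>The generators S_n (n \<ge> 1; S_0 is an unused dummy). In the sum over j \<ge> 1 only
  j with 2j \<le> n-1 contribute (otherwise there are no compositions), so summing over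
  j \<in> {1..n-1} is the full sum.\<close>

function Sgen :: "complex^'n^'n \<Rightarrow> complex^'n^'n \<Rightarrow> complex^'n^'n \<Rightarrow> nat \<Rightarrow> complex^'n^'n" where
  "Sgen P0 G V n =
    (if n = 0 then 0
     else if n = 1 then Lop P0 G (Vod P0 V)
     else if n = 2 then - Lop P0 G (ad (Vd P0 V) (Sgen P0 G V 1))
     else - Lop P0 G (ad (Vd P0 V) (Sgen P0 G V (n - 1)))
          + (\<Sum>j\<in>{1..n-1}. cscale (complex_of_real (a_coef (2 * j)))
               (Lop P0 G (hatS_gen (\<lambda>i. if i < n then Sgen P0 G V i else 0)
                                   (Vod P0 V) (2 * j) (n - 1)))))"
  by pat_completeness auto
termination by (relation "Wellfounded.measure (\<lambda>(P0, G, V, n). n)") auto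

definition hatS :: "complex^'n^'n \<Rightarrow> complex^'n^'n \<Rightarrow> complex^'n^'n \<Rightarrow> nat \<Rightarrow> nat \<Rightarrow> complex^'n^'n" where
  "hatS P0 G V k m = hatS_gen (Sgen P0 G V) (Vod P0 V) k m"

fun vchain :: "complex^'n^'n \<Rightarrow> (complex^'n^'n) list \<Rightarrow> complex^'n^'n" where
  "vchain V [] = mat 1"
| "vchain V [Z] = Z"
| "vchain V (Z # Zs) = Z ** V ** vchain V Zs"

definition Zset :: "complex^'n^'n \<Rightarrow> complex^'n^'n \<Rightarrow> (complex^'n^'n) set" where
  "Zset P0 G = {P0, Qop P0} \<union> {mpow G m | m. m \<ge> 1}"

definition Gamma :: "complex^'n^'n \<Rightarrow> complex^'n^'n \<Rightarrow> complex^'n^'n \<Rightarrow> nat \<Rightarrow> (complex^'n^'n) set" where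
  "Gamma P0 G V n = cspan {vchain V Zs | Zs. length Zs = Suc n \<and> set Zs \<subseteq> Zset P0 G}"

definition Gamma_star :: "complex^'n^'n \<Rightarrow> complex^'n^'n \<Rightarrow> complex^'n^'n \<Rightarrow> nat \<Rightarrow> (complex^'n^'n) set" where
  "Gamma_star P0 G V n = cspan {vchain V Zs | Zs. length Zs = Suc n \<and> set Zs \<subseteq> Zset P0 G
        \<and> hd Zs ** last Zs = 0 \<and> last Zs ** hd Zs = 0}"

end

theory Submission
  imports Defs
begin

text \<open>The classes \<open>\<Gamma>(n)\<close> form a graded algebra: the product of the chains
  \<open>Z\<^sub>0 V \<dots> V Z\<^sub>a\<close> and \<open>W\<^sub>0 V \<dots> V W\<^sub>b\<close> is the chain with the adjacent factors merged
  into \<open>Z\<^sub>a W\<^sub>0\<close>, and \<open>{P\<^sub>0, Q\<^sub>0, G, G\<^sup>2, \<dots>}\<close> is closed under products up to \<open>0\<close>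
  because \<open>P\<^sub>0 G = G P\<^sub>0 = 0\<close>. Hence \<open>\<Gamma>(a) \<Gamma>(b) \<subseteq> \<Gamma>(a + b)\<close>, so commutators raise the degree
  additively. The map \<open>X \<mapsto> P\<^sub>0 X G - G X P\<^sub>0\<close> sends \<open>\<Gamma>(n)\<close> into \<open>\<Gamma>\<^sup>\<star>(n)\<close>: it brackets a chain
  so that its end factors become \<open>P\<^sub>0\<close> and a power of \<open>G\<close> (or \<open>0\<close>), which annihilate each other.\<close>

lemma cscale_module: "module (cscale :: complex \<Rightarrow> complex^'n^'n \<Rightarrow> complex^'n^'n)"
  by unfold_locales (auto simp: cscale_def vec_eq_iff algebra_simps)

interpretation cs: module "cscale :: complex \<Rightarrow> complex^'n^'n \<Rightarrow> complex^'n^'n"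
  by (rule cscale_module)

lemma matrix_add_rdistrib: "((A::complex^'n^'n) + B) ** C = A ** C + B ** C"
  by (vector matrix_matrix_mult_def sum.distrib[symmetric] field_simps)

lemma matrix_diff_ldistrib: "(A::complex^'n^'n) ** (B - C) = A ** B - A ** C"
  by (vector matrix_matrix_mult_def sum_subtractf[symmetric] field_simps)

lemma matrix_diff_rdistrib: "((A::complex^'n^'n) - B) ** C = A ** C - B ** C"
  by (vector matrix_matrix_mult_def sum_subtractf[symmetric] field_simps)

lemma matrix_mul_cscale_left: "cscale c (A::complex^'n^'n) ** B = cscale c (A ** B)"
  by (vector cscale_def matrix_matrix_mult_def sum_distrib_left field_simps)

lemma matrix_mul_cscale_right: "(A::complex^'n^'n) ** cscale c B = cscale c (A ** B)"
  by (vector cscale_def matrix_matrix_mult_def sum_distrib_left field_simps)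

lemma module_hom_matrix_mul_left: "module_hom cscale cscale (\<lambda>X. (A::complex^'n^'n) ** X)"
  by (simp add: module_hom_iff cscale_module matrix_add_ldistrib matrix_mul_cscale_right)

lemma module_hom_matrix_mul_right: "module_hom cscale cscale (\<lambda>X. X ** (B::complex^'n^'n))"
  by (simp add: module_hom_iff cscale_module matrix_add_rdistrib matrix_mul_cscale_left)

lemma module_hom_Lop: "module_hom cscale cscale (Lop P0 G)"
  by (simp add: module_hom_iff cscale_module Lop_def matrix_add_ldistrib matrix_add_rdistrib
      matrix_mul_cscale_left matrix_mul_cscale_right cs.scale_right_diff_distrib)

lemma module_hom_span_into:
  fixes f :: "complex^'n^'n \<Rightarrow> complex^'n^'n"
  assumes "module_hom cscale cscale f" and "f ` A \<subseteq> cs.span C" and "X \<in> cs.span A"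
  shows "f X \<in> cs.span C"
proof -
  have "f X \<in> cs.span (f ` A)"
    using module_hom.span_image[OF assms(1)] assms(3) by blast
  then show ?thesis
    using cs.span_mono[OF assms(2)] by (simp add: cs.span_span subset_iff)
qed

lemma span_matrix_mul:
  fixes X Y :: "complex^'n^'n"
  assumes "\<And>x y. x \<in> A \<Longrightarrow> y \<in> B \<Longrightarrow> x ** y \<in> cs.span C"
    and "X \<in> cs.span A" and "Y \<in> cs.span B"
  shows "X ** Y \<in> cs.span C"
proof -
  have "x ** Y \<in> cs.span C" if "x \<in> A" for x
    using module_hom_span_into[OF module_hom_matrix_mul_left _ assms(3)] assms(1) that by blast
  then show ?thesis
    using module_hom_span_into[OF module_hom_matrix_mul_right _ assms(2)] by blast
qed

lemma mpow_Suc: "mpow A (Suc m) = A ** mpow A m"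
  by (simp add: mpow_def)

lemma mpow_add: "mpow (A::complex^'n^'n) a ** mpow A b = mpow A (a + b)"
  by (induct a) (simp_all add: mpow_Suc mpow_def matrix_mul_assoc[symmetric])

lemma mpow_Suc_right: "mpow (A::complex^'n^'n) (Suc m) = mpow A m ** A"
  using mpow_add[of A m 1] by (simp add: mpow_def)

lemma vchain_zero: "0 \<in> set Zs \<Longrightarrow> vchain V Zs = (0::complex^'n^'n)"
  by (induct V Zs rule: vchain.induct) auto

lemma vchain_mult:
  "vchain V (Xs @ [a]) ** vchain V (b # Ys) = vchain V (Xs @ (a ** b) # (Ys::(complex^'n^'n) list))"
proof (induct Xs)
  case Nil
  then show ?case by (cases Ys) (simp_all add: matrix_mul_assoc)
next
  case (Cons x Xs)
  have "vchain V (x # Xs @ [a]) = x ** V ** vchain V (Xs @ [a])"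
    by (cases "Xs @ [a]") auto
  moreover have "vchain V (x # Xs @ (a ** b) # Ys) = x ** V ** vchain V (Xs @ (a ** b) # Ys)"
    by (cases "Xs @ (a ** b) # Ys") auto
  ultimately show ?case
    using Cons by (simp add: matrix_mul_assoc[symmetric])
qed

lemma vchain_sandwich:
  "A ** vchain V (z # Ms @ [w]) ** B = vchain V ((A ** z) # Ms @ [w ** (B::complex^'n^'n)])"
  using vchain_mult[of V "[]" A z "Ms @ [w]"] vchain_mult[of V "(A ** z) # Ms" w B "[]"] by simp

declare Sgen.simps [simp del]

locale ground_resolvent =
  fixes P0 G V :: "complex^'n^'n"
  assumes P0_idem: "P0 ** P0 = P0"
    and P0_G: "P0 ** G = 0"
    and G_P0: "G ** P0 = 0"
begin

abbreviation "Q \<equiv> Qop P0"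
abbreviation "Z \<equiv> Zset P0 G"
abbreviation "Gpows \<equiv> {mpow G k | k. 1 \<le> k}"

lemma P0_Q: "P0 ** Q = 0" and Q_P0: "Q ** P0 = 0" and Q_idem: "Q ** Q = Q"
  and Q_G: "Q ** G = G" and G_Q: "G ** Q = G"
  by (simp_all add: Qop_def matrix_diff_ldistrib matrix_diff_rdistrib P0_idem P0_G G_P0)

lemma P0_mpow: "1 \<le> k \<Longrightarrow> P0 ** mpow G k = 0"
  by (cases k) (simp_all add: mpow_Suc matrix_mul_assoc P0_G)

lemma mpow_P0: "1 \<le> k \<Longrightarrow> mpow G k ** P0 = 0"
  by (cases k) (simp_all add: mpow_Suc_right matrix_mul_assoc[symmetric] G_P0)

lemma Q_mpow: "1 \<le> k \<Longrightarrow> Q ** mpow G k = mpow G k"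
  by (cases k) (simp_all add: mpow_Suc matrix_mul_assoc Q_G)

lemma mpow_Q: "1 \<le> k \<Longrightarrow> mpow G k ** Q = mpow G k"
  by (cases k) (simp_all add: mpow_Suc_right matrix_mul_assoc[symmetric] G_Q)

lemma G_eq_mpow: "G = mpow G 1"
  by (simp add: mpow_def)

lemma Zset_mult: "z1 \<in> Z \<Longrightarrow> z2 \<in> Z \<Longrightarrow> z1 ** z2 \<in> insert 0 Z"
  unfolding Zset_def
  by (auto simp: P0_idem P0_Q Q_P0 Q_idem P0_mpow mpow_P0 Q_mpow mpow_Q mpow_add)

lemma P0_mult_Zset: "z \<in> Z \<Longrightarrow> P0 ** z \<in> {0, P0}"
  and Zset_mult_P0: "z \<in> Z \<Longrightarrow> z ** P0 \<in> {0, P0}"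
  and G_mult_Zset: "z \<in> Z \<Longrightarrow> G ** z \<in> insert 0 Gpows"
  and Zset_mult_G: "z \<in> Z \<Longrightarrow> z ** G \<in> insert 0 Gpows"
  unfolding Zset_def using G_eq_mpow
  by (auto simp: P0_idem P0_Q Q_P0 P0_mpow mpow_P0 P0_G G_P0 Q_G G_Q
      mpow_Suc[symmetric] mpow_Suc_right[symmetric])

definition chains :: "nat \<Rightarrow> (complex^'n^'n) set" where
  "chains n = {vchain V Zs | Zs. length Zs = Suc n \<and> set Zs \<subseteq> Z}"

definition star_chains :: "nat \<Rightarrow> (complex^'n^'n) set" where
  "star_chains n = {vchain V Zs | Zs. length Zs = Suc n \<and> set Zs \<subseteq> Z
     \<and> hd Zs ** last Zs = 0 \<and> last Zs ** hd Zs = 0}"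

lemma vchain_in_chains: "length Zs = Suc n \<Longrightarrow> set Zs \<subseteq> Z \<Longrightarrow> vchain V Zs \<in> chains n"
  unfolding chains_def by blast

lemma vchain_in_star_chains:
  "length Zs = Suc n \<Longrightarrow> set Zs \<subseteq> Z \<Longrightarrow> hd Zs ** last Zs = 0 \<Longrightarrow> last Zs ** hd Zs = 0
    \<Longrightarrow> vchain V Zs \<in> star_chains n"
  unfolding star_chains_def by blast

lemma Gamma_eq_span: "Gamma P0 G V n = cs.span (chains n)"
  by (simp add: Gamma_def cspan_def chains_def)

lemma Gamma_star_eq_span: "Gamma_star P0 G V n = cs.span (star_chains n)"
  by (simp add: Gamma_star_def cspan_def star_chains_def)

lemma subspace_Gamma: "cs.subspace (Gamma P0 G V n)"
  by (simp add: Gamma_eq_span)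

lemma subspace_Gamma_star: "cs.subspace (Gamma_star P0 G V n)"
  by (simp add: Gamma_star_eq_span)

lemma Gamma_star_subset_Gamma: "Gamma_star P0 G V n \<subseteq> Gamma P0 G V n"
  unfolding Gamma_eq_span Gamma_star_eq_span
  by (rule cs.span_mono) (auto simp: chains_def star_chains_def)

lemma chains_mult: "x \<in> chains a \<Longrightarrow> y \<in> chains b \<Longrightarrow> x ** y \<in> Gamma P0 G V (a + b)"
proof -
  assume "x \<in> chains a" "y \<in> chains b"
  then obtain Zs Ws where Zs: "x = vchain V Zs" "length Zs = Suc a" "set Zs \<subseteq> Z"
    and Ws: "y = vchain V Ws" "length Ws = Suc b" "set Ws \<subseteq> Z"
    unfolding chains_def by blast
  obtain Xs z where "Zs = Xs @ [z]"
    using Zs(2) by (cases Zs rule: rev_exhaust) auto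
  moreover obtain w Ys where "Ws = w # Ys"
    using Ws(2) by (cases Ws) auto
  ultimately have x: "x = vchain V (Xs @ [z])" "length Xs = a" "set (Xs @ [z]) \<subseteq> Z"
    and y: "y = vchain V (w # Ys)" "length Ys = b" "set (w # Ys) \<subseteq> Z"
    using Zs Ws by auto
  have xy: "x ** y = vchain V (Xs @ (z ** w) # Ys)"
    using x(1) y(1) vchain_mult by simp
  have "z ** w \<in> insert 0 Z"
    using Zset_mult x(3) y(3) by simp
  then show ?thesis
  proof
    assume "z ** w = 0"
    then show ?thesis
      using xy vchain_zero[of "Xs @ (z ** w) # Ys" V] by (simp add: cs.subspace_0 subspace_Gamma)
  next
    assume "z ** w \<in> Z"
    have "x ** y \<in> chains (a + b)"
      unfolding xy by (rule vchain_in_chains) (use x y \<open>z ** w \<in> Z\<close> in auto)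
    then show ?thesis
      by (simp add: Gamma_eq_span cs.span_base)
  qed
qed

lemma Gamma_mult:
  "X \<in> Gamma P0 G V a \<Longrightarrow> Y \<in> Gamma P0 G V b \<Longrightarrow> X ** Y \<in> Gamma P0 G V (a + b)"
  using span_matrix_mul[of "chains a" "chains b" "chains (a + b)" X Y] chains_mult
  by (simp add: Gamma_eq_span)

lemma Gamma_ad:
  "S \<in> Gamma P0 G V a \<Longrightarrow> X \<in> Gamma P0 G V b \<Longrightarrow> ad S X \<in> Gamma P0 G V (a + b)"
  unfolding ad_def using Gamma_mult[of S a X b] Gamma_mult[of X b S a]
  by (simp add: cs.subspace_diff subspace_Gamma add.commute)

lemma sandwich_chain_Gamma_star:
  assumes n: "1 \<le> n" and x: "x \<in> chains n"
    and A: "\<And>z. z \<in> Z \<Longrightarrow> A ** z \<in> insert 0 L"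
    and B: "\<And>z. z \<in> Z \<Longrightarrow> z ** B \<in> insert 0 R"
    and "L \<subseteq> Z" and "R \<subseteq> Z"
    and LR: "\<And>l r. l \<in> L \<Longrightarrow> r \<in> R \<Longrightarrow> l ** r = 0 \<and> r ** l = 0"
  shows "A ** x ** B \<in> Gamma_star P0 G V n"
proof -
  obtain Zs where Zs: "x = vchain V Zs" "length Zs = Suc n" "set Zs \<subseteq> Z"
    using x unfolding chains_def by blast
  obtain z Rs where zRs: "Zs = z # Rs"
    using Zs(2) by (cases Zs) auto
  obtain Ms w where "Rs = Ms @ [w]"
    using Zs(2) n zRs by (cases Rs rule: rev_exhaust) auto
  then have x_eq: "x = vchain V (z # Ms @ [w])" and len: "length Ms + 1 = n"
    and set: "set (z # Ms @ [w]) \<subseteq> Z"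
    using Zs zRs by auto
  let ?Ws = "(A ** z) # Ms @ [w ** B]"
  have eq: "A ** x ** B = vchain V ?Ws"
    using x_eq vchain_sandwich by simp
  show ?thesis
  proof (cases "A ** z = 0 \<or> w ** B = 0")
    case True
    then show ?thesis
      using eq vchain_zero[of ?Ws V] by (auto simp: cs.subspace_0 subspace_Gamma_star)
  next
    case False
    then have "A ** z \<in> L" "w ** B \<in> R"
      using A B set by auto
    then have "A ** x ** B \<in> star_chains n"
      using eq len set LR \<open>L \<subseteq> Z\<close> \<open>R \<subseteq> Z\<close> by (auto intro!: vchain_in_star_chains)
    then show ?thesis
      by (simp add: Gamma_star_eq_span cs.span_base)
  qed
qed

lemma Lop_Gamma: "1 \<le> n \<Longrightarrow> X \<in> Gamma P0 G V n \<Longrightarrow> Lop P0 G X \<in> Gamma_star P0 G V n"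
proof -
  assume n: "1 \<le> n" and X: "X \<in> Gamma P0 G V n"
  have Gpows_Z: "Gpows \<subseteq> Z" and P0_Z: "{P0} \<subseteq> Z"
    by (auto simp: Zset_def)
  have "P0 ** x ** G \<in> Gamma_star P0 G V n" if "x \<in> chains n" for x
    by (rule sandwich_chain_Gamma_star[OF n that _ _ P0_Z Gpows_Z])
      (use P0_mult_Zset Zset_mult_G in \<open>auto simp: P0_mpow mpow_P0\<close>)
  moreover have "G ** x ** P0 \<in> Gamma_star P0 G V n" if "x \<in> chains n" for x
    by (rule sandwich_chain_Gamma_star[OF n that _ _ Gpows_Z P0_Z])
      (use G_mult_Zset Zset_mult_P0 in \<open>auto simp: P0_mpow mpow_P0\<close>)
  ultimately have "Lop P0 G ` chains n \<subseteq> Gamma_star P0 G V n"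
    by (auto simp: Lop_def cs.subspace_diff subspace_Gamma_star)
  then show ?thesis
    using module_hom_span_into[OF module_hom_Lop _ X[unfolded Gamma_eq_span]]
    by (simp add: Gamma_star_eq_span)
qed

lemma Vod_Gamma_star: "Vod P0 V \<in> Gamma_star P0 G V 1"
proof -
  have "vchain V [P0, Q] \<in> star_chains 1" "vchain V [Q, P0] \<in> star_chains 1"
    by (rule vchain_in_star_chains; simp add: Zset_def P0_Q Q_P0)+
  then show ?thesis
    by (simp add: Vod_def Gamma_star_eq_span cs.span_add cs.span_base)
qed

lemma Vod_Gamma: "Vod P0 V \<in> Gamma P0 G V 1"
  using Vod_Gamma_star Gamma_star_subset_Gamma by blast

lemma Vd_Gamma: "Vd P0 V \<in> Gamma P0 G V 1"
proof -
  have "vchain V [P0, P0] \<in> chains 1" "vchain V [Q, Q] \<in> chains 1"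
    by (rule vchain_in_chains; simp add: Zset_def)+
  then show ?thesis
    by (simp add: Vd_def Gamma_eq_span cs.span_add cs.span_base)
qed

lemma hatS_gen_Gamma:
  assumes T: "\<And>i. 1 \<le> i \<Longrightarrow> T i \<in> Gamma P0 G V i" and X: "X \<in> Gamma P0 G V 1"
  shows "hatS_gen T X k m \<in> Gamma P0 G V (m + 1)"
proof -
  have "foldr (\<lambda>i Y. ad (T i) Y) ns X \<in> Gamma P0 G V (sum_list ns + 1)"
    if "\<forall>r\<in>set ns. 1 \<le> r" for ns
    using that
  proof (induct ns)
    case Nil
    then show ?case using X by simp
  next
    case (Cons i ns)
    then have "ad (T i) (foldr (\<lambda>i Y. ad (T i) Y) ns X) \<in> Gamma P0 G V (i + (sum_list ns + 1))"
      by (intro Gamma_ad T) auto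
    then show ?case
      by (simp add: add.assoc)
  qed
  then show ?thesis
    unfolding hatS_gen_def by (intro cs.subspace_sum subspace_Gamma) (auto simp: compositions_def)
qed

lemma Sgen_Gamma_star: "1 \<le> n \<Longrightarrow> Sgen P0 G V n \<in> Gamma_star P0 G V n"
proof (induct n rule: less_induct)
  case (less n)
  have IH: "1 \<le> i \<Longrightarrow> i < n \<Longrightarrow> Sgen P0 G V i \<in> Gamma P0 G V i" for i
    using less Gamma_star_subset_Gamma by blast
  have commutator_part: "- Lop P0 G (ad (Vd P0 V) (Sgen P0 G V (n - 1))) \<in> Gamma_star P0 G V n"
    if "2 \<le> n"
    using Lop_Gamma[of n] Gamma_ad[OF Vd_Gamma IH[of "n - 1"]] that
    by (simp add: cs.subspace_neg subspace_Gamma_star)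
  have T: "1 \<le> i \<Longrightarrow> (if i < n then Sgen P0 G V i else 0) \<in> Gamma P0 G V i" for i
    using IH by (simp add: cs.subspace_0 subspace_Gamma)
  have bernoulli_part: "(\<Sum>j\<in>{1..n-1}. cscale (complex_of_real (a_coef (2 * j)))
      (Lop P0 G (hatS_gen (\<lambda>i. if i < n then Sgen P0 G V i else 0) (Vod P0 V) (2 * j) (n - 1))))
      \<in> Gamma_star P0 G V n" if "2 \<le> n"
  proof (intro cs.subspace_sum cs.subspace_scale subspace_Gamma_star)
    fix j
    show "Lop P0 G (hatS_gen (\<lambda>i. if i < n then Sgen P0 G V i else 0) (Vod P0 V) (2 * j) (n - 1))
      \<in> Gamma_star P0 G V n"
      using Lop_Gamma[of n] hatS_gen_Gamma[OF T Vod_Gamma, of "2 * j" "n - 1"] that by simp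
  qed
  consider "n = 1" | "n = 2" | "3 \<le> n"
    using less(2) by linarith
  then show ?case
  proof cases
    case 1
    then show ?thesis
      using Lop_Gamma[OF _ Vod_Gamma] by (subst Sgen.simps) simp
  next
    case 2
    then show ?thesis
      using commutator_part by (subst Sgen.simps) simp
  next
    case 3
    then have "2 \<le> n"
      by simp
    moreover have "Sgen P0 G V n = - Lop P0 G (ad (Vd P0 V) (Sgen P0 G V (n - 1)))
      + (\<Sum>j\<in>{1..n-1}. cscale (complex_of_real (a_coef (2 * j)))
        (Lop P0 G (hatS_gen (\<lambda>i. if i < n then Sgen P0 G V i else 0) (Vod P0 V) (2 * j) (n - 1))))"
      using 3 by (subst Sgen.simps) simp
    ultimately show ?thesis
      using cs.subspace_add[OF subspace_Gamma_star commutator_part bernoulli_part] by simp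
  qed
qed

lemma hatS_Gamma: "hatS P0 G V k m \<in> Gamma P0 G V (m + 1)"
  unfolding hatS_def
  by (rule hatS_gen_Gamma[OF _ Vod_Gamma]) (use Sgen_Gamma_star Gamma_star_subset_Gamma in blast)

end

lemma ground_resolvent_red_resolvent:
  assumes "P0 ** P0 = P0"
  shows "ground_resolvent P0 (red_resolvent E0 H0 P0)"
proof -
  have "P0 ** Qop P0 = 0" "Qop P0 ** P0 = 0"
    using assms by (simp_all add: Qop_def matrix_diff_ldistrib matrix_diff_rdistrib)
  then show ?thesis
    unfolding ground_resolvent_def red_resolvent_def
    by (simp add: assms matrix_mul_assoc) (simp add: matrix_mul_assoc[symmetric])
qed

theorem lemma3:
  fixes H0 V P0 :: "complex^'n^'n" and E0 :: real
  assumes herm_H0: "hermitian_mat H0"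
    and herm_V: "hermitian_mat V"
    and E0_eig: "\<exists>x. x \<noteq> 0 \<and> H0 *v x = complex_of_real E0 *s x"
    and E0_min: "\<forall>(c::complex) x. x \<noteq> 0 \<and> H0 *v x = c *s x \<longrightarrow> E0 \<le> Re c"
    and P0_herm: "hermitian_mat P0"
    and P0_idem: "P0 ** P0 = P0"
    and P0_range: "range ((*v) P0) = {x. H0 *v x = complex_of_real E0 *s x}"
  shows "Vod P0 V \<in> Gamma_star P0 (red_resolvent E0 H0 P0) V 1
    \<and> (\<forall>n\<ge>1. Sgen P0 (red_resolvent E0 H0 P0) V n \<in> Gamma_star P0 (red_resolvent E0 H0 P0) V n)
    \<and> (\<forall>k m. hatS P0 (red_resolvent E0 H0 P0) V k m \<in> Gamma P0 (red_resolvent E0 H0 P0) V (m + 1))"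
proof -
  interpret ground_resolvent P0 "red_resolvent E0 H0 P0" V
    by (rule ground_resolvent_red_resolvent[OF P0_idem])
  show ?thesis
    using Vod_Gamma_star Sgen_Gamma_star hatS_Gamma by blast
qed

end
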